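(* For any aggregator $f:[0,1]^2\to[0,1]$ and any $\lambda\in(0,1]$, $$R_\lambda(f)=\sup_{\theta\in\Theta_4}\mathbb E_\theta\big[L(f(\mathbf x(\mathbf s,\lambda)),\omega)-L(f^*(\mathbf s),\omega)\big],$$ where $\Theta_4\subseteq\Theta$ is the set of conditionally independent structures in which each expert has exactly two possible signals, $\mathcal S_1=\mathcal S_2=\{r,b\}$.
   Context: Setting: a binary world state $\omega\in\{0,1\}$ and two experts. An information structure $\theta$ consists of a prior $\mu=\Pr[\omega=1]\in(0,1)$ and finite signal spaces $\mathcal S_1,\mathcal S_2$ with a joint distribution of $(\omega,S_1,S_2)$ under which $S_1,S_2$ are conditionally independent given $\omega$; $\Theta$ is the set of all such structures. For $\lambda\in(0,1]$, expert $i$ with signal $s_i$ reports $x_i(s_i,\lambda)=\frac{\mu^\lambda\Pr[S_i=s_i\mid\omega=1]}{\mu^\lambda\Pr[S_i=s_i\mid\omega=1]+(1-\mu)^\lambda\Pr[S_i=s_i\mid\omega=0]}$, and $\mathbf x(\mathbf s,\lambda)=(x_1(s_1,\lambda),x_2(s_2,\lambda))$. $f^*(\mathbf s)=\Pr_\theta[\omega=1\mid S_1=s_1,S_2=s_2]$. The loss is $L(y,\omega)=(y-\omega)^2$. The regret is $R_\lambda(f)=\sup_{\theta\in\Theta}\mathbb E_\theta[L(f(\mathbf x(\mathbf s,\lambda)),\omega)-L(f^*(\mathbf s),\omega)]$. *)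

theory Defs
  imports Complex_Main
begin

text \<open>An information structure is represented as a tuple (mu, S1, S2, P1, P2):
  mu = Pr[omega = 1]; S1, S2 are finite signal spaces (encoded as finite sets of naturals);
  Pi w s = Pr[S_i = s | omega = w] (w = True means omega = 1).
  Conditional independence is built in: the joint law is
  Pr[omega = w, S1 = s1, S2 = s2] = Pr[omega = w] * P1 w s1 * P2 w s2.\<close>

type_synonym info_struct =
  "real \<times> nat set \<times> nat set \<times> (bool \<Rightarrow> nat \<Rightarrow> real) \<times> (bool \<Rightarrow> nat \<Rightarrow> real)"

definition cond_dist :: "nat set \<Rightarrow> (bool \<Rightarrow> nat \<Rightarrow> real) \<Rightarrow> bool" where
  "cond_dist S P \<longleftrightarrow> finite S \<and> (\<forall>w. (\<forall>s\<in>S. P w s \<ge> 0) \<and> (\<Sum>s\<in>S. P w s) = 1)"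

definition is_info_struct :: "info_struct \<Rightarrow> bool" where
  "is_info_struct \<theta> = (case \<theta> of (\<mu>, S1, S2, P1, P2) \<Rightarrow>
      0 < \<mu> \<and> \<mu> < 1 \<and> cond_dist S1 P1 \<and> cond_dist S2 P2)"

text \<open>Theta: all structures.  Theta_4: both experts have signal space {r,b}, encoded {0,1}.\<close>
definition Theta :: "info_struct set" where
  "Theta = {\<theta>. is_info_struct \<theta>}"

definition Theta4 :: "info_struct set" where
  "Theta4 = {\<theta>. is_info_struct \<theta> \<and> fst (snd \<theta>) = {0,1} \<and> fst (snd (snd \<theta>)) = {0,1}}"

definition report :: "real \<Rightarrow> real \<Rightarrow> (bool \<Rightarrow> nat \<Rightarrow> real) \<Rightarrow> nat \<Rightarrow> real" where
  "report \<mu> lam P s = \<mu> powr lam * P True s /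
      (\<mu> powr lam * P True s + (1 - \<mu>) powr lam * P False s)"

definition posterior :: "real \<Rightarrow> (bool \<Rightarrow> nat \<Rightarrow> real) \<Rightarrow> (bool \<Rightarrow> nat \<Rightarrow> real) \<Rightarrow> nat \<Rightarrow> nat \<Rightarrow> real" where
  "posterior \<mu> P1 P2 s1 s2 = \<mu> * P1 True s1 * P2 True s2 /
      (\<mu> * P1 True s1 * P2 True s2 + (1 - \<mu>) * P1 False s1 * P2 False s2)"

definition sqloss :: "real \<Rightarrow> bool \<Rightarrow> real" where
  "sqloss y w = (y - (if w then 1 else 0))\<^sup>2"

definition excess_loss :: "(real \<Rightarrow> real \<Rightarrow> real) \<Rightarrow> real \<Rightarrow> info_struct \<Rightarrow> real" where
  "excess_loss f lam \<theta> = (case \<theta> of (\<mu>, S1, S2, P1, P2) \<Rightarrow>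
     \<Sum>s1\<in>S1. \<Sum>s2\<in>S2. \<Sum>w\<in>(UNIV::bool set).
       (if w then \<mu> else 1 - \<mu>) * P1 w s1 * P2 w s2 *
       (sqloss (f (report \<mu> lam P1 s1) (report \<mu> lam P2 s2)) w
        - sqloss (posterior \<mu> P1 P2 s1 s2) w))"

definition regret :: "(real \<Rightarrow> real \<Rightarrow> real) \<Rightarrow> real \<Rightarrow> real" where
  "regret f lam = (SUP \<theta>\<in>Theta. excess_loss f lam \<theta>)"

end

theory Submission
  imports Defs
begin

(* The excess loss is a sum over the signals of expert 1, and the term of a signal s is a
   positively homogeneous function H of its likelihood column (Pr[s | w = 1], Pr[s | w = 0]):
   reports and posterior are unchanged when the column is rescaled.  Maximising the sum of
   H over columns with prescribed totals is thus linear in the scaling factors: as long as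
   three columns are present, a nontrivial null combination of them (three vectors in R^2)
   can be followed, in the direction that does not decrease the sum, until one column
   vanishes.  So two signals suffice for expert 1, and by exchanging the experts also for
   expert 2. *)

lemma exists_nontrivial_null_combination:
  fixes a1 a2 a3 b1 b2 b3 :: real
  shows "\<exists>e1 e2 e3. (e1 \<noteq> 0 \<or> e2 \<noteq> 0 \<or> e3 \<noteq> 0) \<and>
           e1 * a1 + e2 * a2 + e3 * a3 = 0 \<and> e1 * b1 + e2 * b2 + e3 * b3 = 0"
proof -
  consider "a1 * b2 \<noteq> a2 * b1" | "a1 * b2 = a2 * b1" "a1 \<noteq> 0" | "a1 * b2 = a2 * b1" "b1 \<noteq> 0"
    | "a1 = 0" "b1 = 0" by blast
  then show ?thesis
  proof cases
    case 1
    then show ?thesis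
      by (intro exI[of _ "a2 * b3 - a3 * b2"] exI[of _ "a3 * b1 - a1 * b3"]
          exI[of _ "a1 * b2 - a2 * b1"]) (simp add: algebra_simps)
  next
    case 2
    then show ?thesis
      by (intro exI[of _ a2] exI[of _ "- a1"] exI[of _ 0]) (simp add: algebra_simps)
  next
    case 3
    then show ?thesis
      by (intro exI[of _ b2] exI[of _ "- b1"] exI[of _ 0]) (simp add: algebra_simps)
  next
    case 4
    then show ?thesis by (intro exI[of _ 1] exI[of _ 0]) simp
  qed
qed

lemma exists_negative_of_null_combination:
  fixes e w :: "'a \<Rightarrow> real"
  assumes "finite S" and "\<forall>s\<in>S. 0 < w s" and "(\<Sum>s\<in>S. e s * w s) = 0" and "\<exists>s\<in>S. e s \<noteq> 0"
  shows "\<exists>s\<in>S. e s < 0"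
proof (rule ccontr)
  assume "\<not> (\<exists>s\<in>S. e s < 0)"
  with assms(2) have "\<forall>s\<in>S. 0 \<le> e s * w s"
    by (simp add: not_less less_imp_le)
  with assms(1,3) have "\<forall>s\<in>S. e s * w s = 0"
    using sum_nonneg_eq_0_iff[OF \<open>finite S\<close>, of "\<lambda>s. e s * w s"] by simp
  with assms(2,4) show False by force
qed

lemma homogeneous_sum_shift:
  fixes H :: "real \<Rightarrow> real \<Rightarrow> real" and a b e :: "'a \<Rightarrow> real"
  assumes hom: "\<And>t x y. 0 \<le> t \<Longrightarrow> H (t * x) (t * y) = t * H x y"
    and "finite S" and nonneg: "\<forall>s\<in>S. 0 \<le> a s \<and> 0 \<le> b s"
    and null_a: "(\<Sum>s\<in>S. e s * a s) = 0" and null_b: "(\<Sum>s\<in>S. e s * b s) = 0"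
    and gain: "0 \<le> (\<Sum>s\<in>S. e s * H (a s) (b s))"
    and "\<exists>s\<in>S. e s < 0"
  shows "\<exists>a' b' k. (\<forall>s\<in>S. 0 \<le> a' s \<and> 0 \<le> b' s) \<and> sum a' S = sum a S \<and> sum b' S = sum b S \<and>
           (\<Sum>s\<in>S. H (a s) (b s)) \<le> (\<Sum>s\<in>S. H (a' s) (b' s)) \<and> k \<in> S \<and> a' k = 0 \<and> b' k = 0"
proof -
  obtain s where s: "s \<in> S" "e s < 0" using \<open>\<exists>s\<in>S. e s < 0\<close> by blast
  define k where "k = arg_min_on e S"
  have k: "k \<in> S" "\<forall>s\<in>S. e k \<le> e s"
    using arg_min_if_finite[OF \<open>finite S\<close>, of e] s(1) by (auto simp: k_def not_less)
  then have "e k < 0" using s by force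
  \<comment> \<open>Move along the null direction e until column k, where e is most negative, vanishes.\<close>
  define c where "c s = 1 - e s / e k" for s
  have c_nonneg: "0 \<le> c s" if "s \<in> S" for s
    using k \<open>e k < 0\<close> that by (simp add: c_def)
  have sum_c: "(\<Sum>s\<in>S. c s * g s) = sum g S - (\<Sum>s\<in>S. e s * g s) / e k" for g
    by (simp add: c_def algebra_simps sum_subtractf sum_divide_distrib)
  have "(\<Sum>s\<in>S. H (a s) (b s)) \<le> (\<Sum>s\<in>S. c s * H (a s) (b s))"
    using sum_c[of "\<lambda>s. H (a s) (b s)"] gain \<open>e k < 0\<close> by (simp add: divide_nonneg_neg)
  also have "\<dots> = (\<Sum>s\<in>S. H (c s * a s) (c s * b s))"
    using hom c_nonneg by (intro sum.cong) auto
  finally have "(\<Sum>s\<in>S. H (a s) (b s)) \<le> (\<Sum>s\<in>S. H (c s * a s) (c s * b s))" .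
  moreover have "\<forall>s\<in>S. 0 \<le> c s * a s \<and> 0 \<le> c s * b s"
    using nonneg c_nonneg by simp
  moreover have "(\<Sum>s\<in>S. c s * a s) = sum a S" "(\<Sum>s\<in>S. c s * b s) = sum b S"
    using sum_c null_a null_b by simp_all
  moreover have "c k = 0" using \<open>e k < 0\<close> by (simp add: c_def)
  ultimately show ?thesis using k(1)
    by (intro exI[of _ "\<lambda>s. c s * a s"] exI[of _ "\<lambda>s. c s * b s"] exI[of _ k]) simp
qed

lemma homogeneous_sum_eliminate_column:
  fixes H :: "real \<Rightarrow> real \<Rightarrow> real" and a b :: "'a \<Rightarrow> real"
  assumes hom: "\<And>t x y. 0 \<le> t \<Longrightarrow> H (t * x) (t * y) = t * H x y"
    and "finite S" and nonneg: "\<forall>s\<in>S. 0 \<le> a s \<and> 0 \<le> b s"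
    and three: "s1 \<in> S" "s2 \<in> S" "s3 \<in> S" "s1 \<noteq> s2" "s1 \<noteq> s3" "s2 \<noteq> s3"
  shows "\<exists>a' b' k. (\<forall>s\<in>S. 0 \<le> a' s \<and> 0 \<le> b' s) \<and> sum a' S = sum a S \<and> sum b' S = sum b S \<and>
           (\<Sum>s\<in>S. H (a s) (b s)) \<le> (\<Sum>s\<in>S. H (a' s) (b' s)) \<and> k \<in> S \<and> a' k = 0 \<and> b' k = 0"
proof (cases "\<exists>k\<in>S. a k = 0 \<and> b k = 0")
  case True
  then show ?thesis using nonneg by blast
next
  case False
  have pos: "\<forall>s\<in>S. 0 < a s + b s"
  proof
    fix s assume "s \<in> S"
    then have "0 \<le> a s" "0 \<le> b s" "\<not> (a s = 0 \<and> b s = 0)" using False nonneg by auto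
    then show "0 < a s + b s" by linarith
  qed
  obtain e1 e2 e3 where nontriv: "e1 \<noteq> 0 \<or> e2 \<noteq> 0 \<or> e3 \<noteq> 0"
    and null: "e1 * a s1 + e2 * a s2 + e3 * a s3 = 0" "e1 * b s1 + e2 * b s2 + e3 * b s3 = 0"
    using exists_nontrivial_null_combination by blast
  define \<sigma> :: real where "\<sigma> = (if 0 \<le> e1 * H (a s1) (b s1) + e2 * H (a s2) (b s2) + e3 * H (a s3) (b s3)
                                 then 1 else -1)"
  define e where "e s = \<sigma> * (if s = s1 then e1 else if s = s2 then e2 else if s = s3 then e3 else 0)" for s
  have e_at: "e s1 = \<sigma> * e1" "e s2 = \<sigma> * e2" "e s3 = \<sigma> * e3"
    using three by (simp_all add: e_def)
  have sum_e: "(\<Sum>s\<in>S. e s * g s) = \<sigma> * (e1 * g s1 + e2 * g s2 + e3 * g s3)" for g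
  proof -
    have "(\<Sum>s\<in>S. e s * g s) = (\<Sum>s\<in>{s1, s2, s3}. e s * g s)"
      using three \<open>finite S\<close> by (intro sum.mono_neutral_right) (auto simp: e_def)
    also have "\<dots> = e s1 * g s1 + e s2 * g s2 + e s3 * g s3"
      using three by simp
    finally show ?thesis by (simp add: e_at algebra_simps)
  qed
  have null_a: "(\<Sum>s\<in>S. e s * a s) = 0" and null_b: "(\<Sum>s\<in>S. e s * b s) = 0"
    using sum_e null by simp_all
  have "\<sigma> \<noteq> 0" by (simp add: \<sigma>_def)
  with nontriv have "e s1 \<noteq> 0 \<or> e s2 \<noteq> 0 \<or> e s3 \<noteq> 0" by (simp add: e_at)
  with three have "\<exists>s\<in>S. e s \<noteq> 0" by blast
  moreover have "(\<Sum>s\<in>S. e s * (a s + b s)) = 0"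
    using null_a null_b by (simp add: distrib_left sum.distrib)
  ultimately have negative: "\<exists>s\<in>S. e s < 0"
    by (rule exists_negative_of_null_combination[OF \<open>finite S\<close> pos, rotated])
  have gain: "0 \<le> (\<Sum>s\<in>S. e s * H (a s) (b s))"
    unfolding sum_e by (simp add: \<sigma>_def)
  show ?thesis
    by (rule homogeneous_sum_shift[OF hom \<open>finite S\<close> nonneg null_a null_b gain negative])
qed

lemma homogeneous_sum_le_two_columns:
  fixes H :: "real \<Rightarrow> real \<Rightarrow> real" and a b :: "'a \<Rightarrow> real"
  assumes hom: "\<And>t x y. 0 \<le> t \<Longrightarrow> H (t * x) (t * y) = t * H x y"
    and "finite S" and "\<forall>s\<in>S. 0 \<le> a s \<and> 0 \<le> b s"
  shows "\<exists>x0 y0 x1 y1. 0 \<le> x0 \<and> 0 \<le> y0 \<and> 0 \<le> x1 \<and> 0 \<le> y1 \<and>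
           x0 + x1 = sum a S \<and> y0 + y1 = sum b S \<and>
           (\<Sum>s\<in>S. H (a s) (b s)) \<le> H x0 y0 + H x1 y1"
  using assms(2,3)
proof (induction "card S" arbitrary: S a b rule: less_induct)
  case less
  have H0: "H 0 0 = 0" using hom[of 0 0 0] by simp
  show ?case
  proof (cases "card S \<le> 2")
    case True
    then have "card S = 0 \<or> card S = 1 \<or> card S = 2" by linarith
    then show ?thesis
    proof (elim disjE)
      assume "card S = 0"
      then have "S = {}" using less.prems(1) by simp
      then show ?thesis using H0 by (intro exI[of _ 0]) simp
    next
      assume "card S = 1"
      then obtain p where "S = {p}" by (auto simp: card_1_singleton_iff)
      then show ?thesis using less.prems(2) H0
        by (intro exI[of _ "a p"] exI[of _ "b p"] exI[of _ 0]) simp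
    next
      assume "card S = 2"
      then obtain p q where "S = {p, q}" "p \<noteq> q" by (auto simp: card_2_iff)
      then show ?thesis using less.prems(2)
        by (intro exI[of _ "a p"] exI[of _ "b p"] exI[of _ "a q"] exI[of _ "b q"]) simp
    qed
  next
    case False
    then obtain T where "T \<subseteq> S" "card T = 3"
      using obtain_subset_with_card_n[of 3 S] by force
    from \<open>card T = 3\<close> obtain s1 s2 s3 where "T = {s1, s2, s3}" "s1 \<noteq> s2" "s2 \<noteq> s3" "s1 \<noteq> s3"
      unfolding card_3_iff by blast
    with \<open>T \<subseteq> S\<close> have "s1 \<in> S" "s2 \<in> S" "s3 \<in> S" by auto
    then obtain a' b' k where shifted: "\<forall>s\<in>S. 0 \<le> a' s \<and> 0 \<le> b' s"
      "sum a' S = sum a S" "sum b' S = sum b S"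
      "(\<Sum>s\<in>S. H (a s) (b s)) \<le> (\<Sum>s\<in>S. H (a' s) (b' s))" and k: "k \<in> S" "a' k = 0" "b' k = 0"
      using homogeneous_sum_eliminate_column[where H = H, OF hom less.prems]
        \<open>s1 \<noteq> s2\<close> \<open>s2 \<noteq> s3\<close> \<open>s1 \<noteq> s3\<close> by blast
    have "card (S - {k}) < card S" using k less.prems(1) by (metis card_Diff1_less)
    moreover have "finite (S - {k})" "\<forall>s\<in>S - {k}. 0 \<le> a' s \<and> 0 \<le> b' s"
      using less.prems(1) shifted(1) by auto
    ultimately obtain x0 y0 x1 y1 where IH: "0 \<le> x0" "0 \<le> y0" "0 \<le> x1" "0 \<le> y1"
      "x0 + x1 = sum a' (S - {k})" "y0 + y1 = sum b' (S - {k})"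
      "(\<Sum>s\<in>S - {k}. H (a' s) (b' s)) \<le> H x0 y0 + H x1 y1"
      by (blast dest: less.hyps)
    have "sum a' (S - {k}) = sum a S" "sum b' (S - {k}) = sum b S"
      "(\<Sum>s\<in>S - {k}. H (a' s) (b' s)) = (\<Sum>s\<in>S. H (a' s) (b' s))"
      using k less.prems(1) shifted(2,3) H0 by (simp_all add: sum.remove)
    then show ?thesis
      using IH shifted(4) by (intro exI[of _ x0] exI[of _ y0] exI[of _ x1] exI[of _ y1]) simp
  qed
qed

lemma SUP_real_cofinal_eq:
  fixes g :: "'a \<Rightarrow> real"
  assumes "B \<subseteq> A" and "\<forall>x\<in>A. \<exists>y\<in>B. g x \<le> g y"
  shows "(SUP x\<in>A. g x) = (SUP y\<in>B. g y)"
proof -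
  \<comment> \<open>Sup on real depends only on the set of upper bounds, also for unbounded sets.\<close>
  have "(\<forall>x\<in>A. g x \<le> z) \<longleftrightarrow> (\<forall>y\<in>B. g y \<le> z)" for z
    using assms by (meson order_trans subsetD)
  then show ?thesis unfolding Sup_real_def by simp
qed

definition signal_excess ::
  "(real \<Rightarrow> real \<Rightarrow> real) \<Rightarrow> real \<Rightarrow> real \<Rightarrow> nat set \<Rightarrow> (bool \<Rightarrow> nat \<Rightarrow> real) \<Rightarrow>
    real \<Rightarrow> real \<Rightarrow> real"
  where "signal_excess f lam \<mu> S2 P2 x y = excess_loss f lam (\<mu>, {0}, S2, \<lambda>w _. if w then x else y, P2)"

lemma excess_loss_eq_sum_signal_excess:
  "excess_loss f lam (\<mu>, S1, S2, P1, P2) =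
     (\<Sum>s1\<in>S1. signal_excess f lam \<mu> S2 P2 (P1 True s1) (P1 False s1))"
  by (simp add: signal_excess_def excess_loss_def report_def posterior_def UNIV_bool)

lemma report_scale:
  assumes "0 < t"
  shows "report \<mu> lam (\<lambda>w s. t * P w s) s = report \<mu> lam P s"
proof -
  have "report \<mu> lam (\<lambda>w s. t * P w s) s = t * (\<mu> powr lam * P True s) /
          (t * (\<mu> powr lam * P True s + (1 - \<mu>) powr lam * P False s))"
    by (simp add: report_def algebra_simps)
  then show ?thesis using assms by (simp add: report_def)
qed

lemma posterior_scale_left:
  assumes "0 < t"
  shows "posterior \<mu> (\<lambda>w s. t * P1 w s) P2 s1 s2 = posterior \<mu> P1 P2 s1 s2"
proof -
  have "posterior \<mu> (\<lambda>w s. t * P1 w s) P2 s1 s2 = t * (\<mu> * P1 True s1 * P2 True s2) /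
          (t * (\<mu> * P1 True s1 * P2 True s2 + (1 - \<mu>) * P1 False s1 * P2 False s2))"
    by (simp add: posterior_def algebra_simps)
  then show ?thesis using assms by (simp add: posterior_def)
qed

lemma signal_excess_homogeneous:
  assumes "0 \<le> t"
  shows "signal_excess f lam \<mu> S2 P2 (t * x) (t * y) = t * signal_excess f lam \<mu> S2 P2 x y"
proof (cases "t = 0")
  case True
  then show ?thesis by (simp add: signal_excess_def excess_loss_def)
next
  case False
  with assms have "0 < t" by simp
  define P :: "bool \<Rightarrow> nat \<Rightarrow> real" where "P = (\<lambda>w _. if w then x else y)"
  have scaled: "(\<lambda>w (_::nat). if w then t * x else t * y) = (\<lambda>w s. t * P w s)"
    by (simp add: P_def fun_eq_iff)
  show ?thesis
    unfolding signal_excess_def scaled P_def[symmetric] excess_loss_def prod.case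
    by (simp add: report_scale[OF \<open>0 < t\<close>] posterior_scale_left[OF \<open>0 < t\<close>]
        UNIV_bool sum_distrib_left algebra_simps)
qed

lemma posterior_swap: "posterior \<mu> P2 P1 s2 s1 = posterior \<mu> P1 P2 s1 s2"
  by (simp add: posterior_def ac_simps)

lemma excess_loss_swap:
  "excess_loss f lam (\<mu>, S1, S2, P1, P2) = excess_loss (\<lambda>x y. f y x) lam (\<mu>, S2, S1, P2, P1)"
  unfolding excess_loss_def prod.case posterior_swap[of \<mu> P2 P1]
  by (rule trans[OF sum.swap]) (simp add: ac_simps)

lemma is_info_struct_swap:
  "is_info_struct (\<mu>, S1, S2, P1, P2) \<longleftrightarrow> is_info_struct (\<mu>, S2, S1, P2, P1)"
  by (auto simp: is_info_struct_def)

lemma first_expert_binary_dominates: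
  assumes "is_info_struct (\<mu>, S1, S2, P1, P2)"
  shows "\<exists>Q1. is_info_struct (\<mu>, {0, 1}, S2, Q1, P2) \<and>
           excess_loss f lam (\<mu>, S1, S2, P1, P2) \<le> excess_loss f lam (\<mu>, {0, 1}, S2, Q1, P2)"
proof -
  from assms have "finite S1" and nonneg: "\<forall>s\<in>S1. 0 \<le> P1 True s \<and> 0 \<le> P1 False s"
    and total: "sum (P1 True) S1 = 1" "sum (P1 False) S1 = 1"
    by (auto simp: is_info_struct_def cond_dist_def)
  obtain x0 y0 x1 y1 where "0 \<le> x0" "0 \<le> y0" "0 \<le> x1" "0 \<le> y1"
    "x0 + x1 = sum (P1 True) S1" "y0 + y1 = sum (P1 False) S1" and
    gain: "(\<Sum>s\<in>S1. signal_excess f lam \<mu> S2 P2 (P1 True s) (P1 False s))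
             \<le> signal_excess f lam \<mu> S2 P2 x0 y0 + signal_excess f lam \<mu> S2 P2 x1 y1"
    using homogeneous_sum_le_two_columns[where H = "signal_excess f lam \<mu> S2 P2",
        OF signal_excess_homogeneous \<open>finite S1\<close> nonneg]
    by blast
  define Q1 :: "bool \<Rightarrow> nat \<Rightarrow> real"
    where "Q1 w n = (if n = 0 then (if w then x0 else y0) else (if w then x1 else y1))" for w n
  have "cond_dist {0, 1} Q1"
    unfolding cond_dist_def Q1_def using \<open>0 \<le> x0\<close> \<open>0 \<le> y0\<close> \<open>0 \<le> x1\<close> \<open>0 \<le> y1\<close>
      \<open>x0 + x1 = _\<close> \<open>y0 + y1 = _\<close> total by auto
  then have "is_info_struct (\<mu>, {0, 1}, S2, Q1, P2)"
    using assms by (simp add: is_info_struct_def)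
  moreover have "excess_loss f lam (\<mu>, S1, S2, P1, P2) \<le> excess_loss f lam (\<mu>, {0, 1}, S2, Q1, P2)"
    unfolding excess_loss_eq_sum_signal_excess using gain by (simp add: Q1_def)
  ultimately show ?thesis by blast
qed

lemma binary_structure_dominates:
  assumes "\<theta> \<in> Theta"
  shows "\<exists>\<theta>'\<in>Theta4. excess_loss f lam \<theta> \<le> excess_loss f lam \<theta>'"
proof -
  obtain \<mu> S1 S2 P1 P2 where \<theta>: "\<theta> = (\<mu>, S1, S2, P1, P2)" by (cases \<theta>) auto
  with assms have "is_info_struct (\<mu>, S1, S2, P1, P2)" by (simp add: Theta_def)
  from first_expert_binary_dominates[OF this] obtain Q1
    where Q1: "is_info_struct (\<mu>, {0, 1}, S2, Q1, P2)"
      "excess_loss f lam (\<mu>, S1, S2, P1, P2) \<le> excess_loss f lam (\<mu>, {0, 1}, S2, Q1, P2)"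
    by blast
  let ?g = "\<lambda>x y. f y x"
  from Q1(1) have "is_info_struct (\<mu>, S2, {0, 1}, P2, Q1)"
    by (rule is_info_struct_swap[THEN iffD1])
  from first_expert_binary_dominates[OF this] obtain Q2
    where Q2: "is_info_struct (\<mu>, {0, 1}, {0, 1}, Q2, Q1)"
      "excess_loss ?g lam (\<mu>, S2, {0, 1}, P2, Q1) \<le> excess_loss ?g lam (\<mu>, {0, 1}, {0, 1}, Q2, Q1)"
    by blast
  have "excess_loss f lam (\<mu>, {0, 1}, S2, Q1, P2) = excess_loss ?g lam (\<mu>, S2, {0, 1}, P2, Q1)"
    by (rule excess_loss_swap)
  moreover have "excess_loss ?g lam (\<mu>, {0, 1}, {0, 1}, Q2, Q1)
                  = excess_loss f lam (\<mu>, {0, 1}, {0, 1}, Q1, Q2)"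
    using excess_loss_swap[of ?g lam \<mu> "{0, 1}" "{0, 1}" Q2 Q1] by simp
  ultimately have "excess_loss f lam \<theta> \<le> excess_loss f lam (\<mu>, {0, 1}, {0, 1}, Q1, Q2)"
    using Q1(2) Q2(2) unfolding \<theta> by linarith
  moreover have "is_info_struct (\<mu>, {0, 1}, {0, 1}, Q1, Q2)"
    using Q2(1) by (rule is_info_struct_swap[THEN iffD1])
  then have "(\<mu>, {0, 1}, {0, 1}, Q1, Q2) \<in> Theta4" by (simp add: Theta4_def)
  ultimately show ?thesis by blast
qed

theorem mainTheorem2:
  fixes f :: "real \<Rightarrow> real \<Rightarrow> real" and lam :: real
  assumes "\<forall>x\<in>{0..1}. \<forall>y\<in>{0..1}. f x y \<in> {0..1}"
    and "0 < lam" and "lam \<le> 1"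
  shows "regret f lam = (SUP \<theta>\<in>Theta4. excess_loss f lam \<theta>)"
  unfolding regret_def
proof (rule SUP_real_cofinal_eq)
  show "Theta4 \<subseteq> Theta" by (auto simp: Theta_def Theta4_def)
  show "\<forall>\<theta>\<in>Theta. \<exists>\<theta>'\<in>Theta4. excess_loss f lam \<theta> \<le> excess_loss f lam \<theta>'"
    using binary_structure_dominates by blast
qed

end
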